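(* Let $\Omega\subset\mathbb{R}^N$ be a bounded open set and let $p,q:\Omega\to[1,\infty)$ be measurable with $q(x)\le p(x)\le p_+<\infty$ for all $x\in\Omega$. Let $s(x)=\frac{1}{p(x)-q(x)}\in(0,\infty]$ (with $s(x)=\infty$ where $p(x)=q(x)$). If $$\int_0^{|\Omega|}a^{s^*(t)}\,dt<\infty\quad\text{for all } a>1,$$ then $L^{p(\cdot)}(\Omega)$ is almost-compactly embedded in $L^{q(\cdot)}(\Omega)$.
   Context: $|\cdot|$ is Lebesgue measure. For a measurable function $u$ on $\Omega$ (possibly extended-valued), its non-increasing rearrangement is $u^*(t)=\inf\{\lambda>0:\ |\{x\in\Omega:|u(x)|>\lambda\}|\le t\}$, $t\ge0$. For measurable $e:\Omega\to[1,\infty)$, $\|u\|_{e(\cdot)}=\inf\{\lambda>0:\int_\Omega|u(x)/\lambda|^{e(x)}dx\le1\}$ and $L^{e(\cdot)}(\Omega)$ is the set of measurable $u$ with finite norm. Almost-compact embedding: for Banach function spaces $X,Y$ on $\Omega$, $X$ is almost-compactly embedded in $Y$ if for every sequence $\{E_n\}$ of measurable subsets of $\Omega$ with $\chi_{E_n}\to0$ pointwise a.e. one has $\lim_{n\to\infty}\sup_{\|u\|_X\le1}\|u\chi_{E_n}\|_Y=0$. *)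

theory Defs
  imports "HOL-Analysis.Analysis"
begin

definition rearrangement :: "'a::euclidean_space set \<Rightarrow> ('a \<Rightarrow> ereal) \<Rightarrow> real \<Rightarrow> ereal" where
  "rearrangement \<Omega> u t =
     Inf (ereal ` {l::real. l > 0 \<and>
        emeasure lebesgue {x\<in>\<Omega>. \<bar>u x\<bar> > ereal l} \<le> ennreal t})"

text \<open>Variable-exponent Luxemburg norm (value infinity if the defining set is empty).\<close>
definition var_norm :: "'a::euclidean_space set \<Rightarrow> ('a \<Rightarrow> real) \<Rightarrow> ('a \<Rightarrow> real) \<Rightarrow> ennreal" where
  "var_norm \<Omega> e u =
     Inf (ennreal ` {l::real. l > 0 \<and>
        (\<integral>\<^sup>+ x. ennreal (\<bar>u x / l\<bar> powr e x) * indicator \<Omega> x \<partial>lebesgue) \<le> 1})"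

definition meas_on :: "'a::euclidean_space set \<Rightarrow> ('a \<Rightarrow> real) \<Rightarrow> bool" where
  "meas_on \<Omega> u \<longleftrightarrow> u \<in> borel_measurable (restrict_space lebesgue \<Omega>)"

definition var_Lebesgue :: "'a::euclidean_space set \<Rightarrow> ('a \<Rightarrow> real) \<Rightarrow> ('a \<Rightarrow> real) set" where
  "var_Lebesgue \<Omega> e = {u. meas_on \<Omega> u \<and> var_norm \<Omega> e u < \<infinity>}"

definition almost_compact_embedding ::
  "'a::euclidean_space set \<Rightarrow> ('a \<Rightarrow> real) \<Rightarrow> ('a \<Rightarrow> real) \<Rightarrow> bool" where
  "almost_compact_embedding \<Omega> p q \<longleftrightarrow>
     (\<forall>E :: nat \<Rightarrow> 'a set.
        (\<forall>n. E n \<in> sets lebesgue \<and> E n \<subseteq> \<Omega>) \<longrightarrow>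
        (AE x in lebesgue. (\<lambda>n. indicator (E n) x :: real) \<longlonglongrightarrow> 0) \<longrightarrow>
        (\<lambda>n. SUP u\<in>{u \<in> var_Lebesgue \<Omega> p. var_norm \<Omega> p u \<le> 1}.
              var_norm \<Omega> q (\<lambda>x. u x * indicator (E n) x)) \<longlonglongrightarrow> 0)"

definition epow :: "real \<Rightarrow> ereal \<Rightarrow> ennreal" where
  "epow a e = (if e = \<infinity> then \<infinity> else ennreal (a powr real_of_ereal e))"

end

theory Submission
  imports Defs
begin

(* With s = 1/(p - q) and P an upper bound of p, Young's inequality gives, for 0 < l <= 1,
   (|u|/l)^q <= 2^-(P+1) |u|^p + A(l)^s  with  A(l) = 2^((P+1)P) l^(-P^2).
   Hence if the p-norm of u is at most 1 (so the p-modular of u is at most 2^P), the q-modular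
   of u chi_E / l is at most 1/2 + int_E A(l)^s, and the q-norm of u chi_E is at most l as soon
   as int_E A(l)^s <= 1/2.  For E = E_n this eventually holds by dominated convergence, since
   a^s is integrable on Omega for every a > 1: slicing a^s into the layers
   (a^k - a^(k-1)) chi_{s > k} bounds int_Omega a^s by a * int_0^|Omega| a^(s*(t)) dt. *)

lemma powr_div_le_young:
  fixes u p q d l :: real
  assumes "0 < q" "q < p" "0 < d" "0 < l"
  shows "(\<bar>u\<bar> / l) powr q \<le> d * \<bar>u\<bar> powr p + (d powr (-q) * l powr (-(p*q))) powr (1/(p-q))"
proof -
  define s where "s = 1/(p-q)"
  define B where "B = l powr (-q) / d"
  have "s > 0" "B > 0" using assms by (simp_all add: s_def B_def)
  have base: "(\<bar>u\<bar> / l) powr q = \<bar>u\<bar> powr q * l powr (-q)"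
    using assms by (simp add: powr_divide powr_minus divide_simps)
  show ?thesis
  proof (cases "B \<le> \<bar>u\<bar> powr (p-q)")
    case True
    then have "\<bar>u\<bar> > 0" using \<open>B > 0\<close> by (metis abs_ge_zero less_eq_real_def not_le powr_0)
    have "(\<bar>u\<bar> / l) powr q = \<bar>u\<bar> powr q * (d * B)" using base assms by (simp add: B_def)
    also have "\<dots> \<le> \<bar>u\<bar> powr q * (d * \<bar>u\<bar> powr (p-q))"
      using True assms by (intro mult_left_mono) auto
    also have "\<dots> = d * \<bar>u\<bar> powr p" using \<open>\<bar>u\<bar> > 0\<close> by (simp add: powr_diff field_simps)
    finally show ?thesis by (smt (verit) powr_ge_zero)
  next
    case False
    have "\<bar>u\<bar> = (\<bar>u\<bar> powr (p-q)) powr s" using assms by (simp add: s_def powr_powr)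
    also have "\<dots> \<le> B powr s" using False \<open>s > 0\<close> by (intro powr_mono2) auto
    finally have "(\<bar>u\<bar> / l) powr q \<le> (B powr s) powr q * l powr (-q)"
      using base assms by (simp add: powr_mono2)
    also have "\<dots> = (d powr (-q) * l powr (-(p*q))) powr s"
      using assms by (simp add: B_def s_def powr_powr powr_divide powr_mult powr_minus
          powr_add[symmetric] field_simps)
    finally show ?thesis unfolding s_def by (smt (verit) mult_nonneg_nonneg powr_ge_zero \<open>0 < d\<close>)
  qed
qed

lemma powr_div_le_young_uniform:
  fixes u p q P l :: real
  assumes "1 \<le> q" "q < p" "p \<le> P" "0 < l" "l \<le> 1"
  shows "(\<bar>u\<bar> / l) powr q
    \<le> 2 powr (-(P+1)) * \<bar>u\<bar> powr p + (2 powr ((P+1)*P) * l powr (-(P*P))) powr (1/(p-q))"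
proof -
  have "(P+1)*q \<le> (P+1)*P" using assms by (intro mult_left_mono) auto
  then have "(2 powr (-(P+1))) powr (-q) \<le> 2 powr ((P+1)*P)"
    by (simp add: powr_powr algebra_simps)
  moreover have "l powr (-(p*q)) \<le> l powr (-(P*P))"
    using assms by (intro powr_mono') (auto intro!: mult_mono)
  ultimately have "(2 powr (-(P+1))) powr (-q) * l powr (-(p*q)) \<le> 2 powr ((P+1)*P) * l powr (-(P*P))"
    by (intro mult_mono) auto
  then have "((2 powr (-(P+1))) powr (-q) * l powr (-(p*q))) powr (1/(p-q))
      \<le> (2 powr ((P+1)*P) * l powr (-(P*P))) powr (1/(p-q))"
    using assms by (intro powr_mono2) auto
  then show ?thesis using powr_div_le_young[of q p "2 powr (-(P+1))" l u] assms by simp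
qed

definition power_step :: "real \<Rightarrow> nat \<Rightarrow> real" where
  "power_step a k = (if k = 0 then 1 else a ^ k - a ^ (k - 1))"

lemma power_step_nonneg: "1 \<le> a \<Longrightarrow> 0 \<le> power_step a k"
  by (cases k) (auto simp: power_step_def intro: power_increasing)

lemma sum_power_step: "(\<Sum>k<Suc n. power_step a k) = a ^ n"
  by (induction n) (auto simp: power_step_def)

lemma power_le_suminf_power_step:
  assumes "1 \<le> a" and "\<And>k. k \<le> n \<Longrightarrow> P k"
  shows "ennreal (a ^ n) \<le> (\<Sum>k. ennreal (power_step a k) * of_bool (P k))"
proof -
  have "(\<Sum>k<Suc n. ennreal (power_step a k) * of_bool (P k))
      = (\<Sum>k<Suc n. ennreal (power_step a k))"
    using assms(2) by (intro sum.cong) auto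
  also have "\<dots> = ennreal (\<Sum>k<Suc n. power_step a k)"
    using assms(1) power_step_nonneg by (subst sum_ennreal) auto
  finally have "ennreal (a ^ n) = (\<Sum>k<Suc n. ennreal (power_step a k) * of_bool (P k))"
    by (simp only: sum_power_step)
  also have "\<dots> \<le> (\<Sum>k. ennreal (power_step a k) * of_bool (P k))"
    by (rule sum_le_suminf) auto
  finally show ?thesis .
qed

lemma epow_le_suminf_power_step:
  assumes "1 < a" and "0 < e"
  shows "epow a e \<le> ennreal a * (\<Sum>k. ennreal (power_step a k) * of_bool (ereal (real k) < e))"
    (is "_ \<le> _ * ?sum")
proof (cases e)
  case (real r)
  define K where "K = nat (\<lceil>r\<rceil> - 1)"
  have "real K < r" "r \<le> real K + 1"
    unfolding K_def using assms real by (auto simp: of_nat_nat) linarith+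
  have "a powr r \<le> a powr (real K + 1)" using assms \<open>r \<le> real K + 1\<close> by (intro powr_mono) auto
  then have "epow a e \<le> ennreal a * ennreal (a ^ K)"
    using assms real by (simp add: epow_def powr_add powr_realpow mult.commute ennreal_mult[symmetric] ennreal_leI)
  also have "ennreal (a ^ K) \<le> ?sum"
    using assms \<open>real K < r\<close> real by (intro power_le_suminf_power_step) auto
  finally show ?thesis by (simp add: mult_left_mono)
next
  case PInf
  have "?sum = \<infinity>"
  proof (rule ccontr)
    assume "?sum \<noteq> \<infinity>"
    then obtain y where y: "?sum = ennreal y" by (cases ?sum rule: ennreal_cases) auto
    obtain n where "y < a ^ n" using real_arch_pow[OF \<open>1 < a\<close>] by blast
    moreover have "ennreal (a ^ n) \<le> ennreal y"
      using assms PInf y[symmetric] power_le_suminf_power_step[of a n "\<lambda>k. ereal (real k) < e"] by auto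
    moreover have "0 < a ^ n" using assms by simp
    ultimately show False unfolding ennreal_le_iff2 by linarith
  qed
  then show ?thesis using assms PInf by (simp add: epow_def ennreal_mult_top)
qed (use assms in simp)

lemma suminf_power_step_le_epow:
  assumes "1 < a" and "0 \<le> r" and "\<And>k. P k \<Longrightarrow> ereal (real k) \<le> r"
  shows "(\<Sum>k. ennreal (power_step a k) * of_bool (P k)) \<le> epow a r"
proof (cases r)
  case (real s)
  define K where "K = nat \<lfloor>s\<rfloor>"
  have PK: "P k \<Longrightarrow> k < Suc K" for k
    using assms(3)[of k] real assms(2) unfolding K_def by (simp add: le_nat_floor less_Suc_eq_le)
  have "(\<Sum>k. ennreal (power_step a k) * of_bool (P k))
      = (\<Sum>k<Suc K. ennreal (power_step a k) * of_bool (P k))"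
    by (rule suminf_finite) (auto dest: PK)
  also have "\<dots> \<le> (\<Sum>k<Suc K. ennreal (power_step a k))"
    by (intro sum_mono) auto
  also have "\<dots> = ennreal (\<Sum>k<Suc K. power_step a k)"
    using assms power_step_nonneg[of a] by (subst sum_ennreal) auto
  also have "\<dots> = ennreal (a ^ K)" by (simp only: sum_power_step)
  also have "\<dots> \<le> ennreal (a powr s)"
    using assms real by (simp add: K_def powr_realpow[symmetric] ennreal_leI powr_mono)
  finally show ?thesis using real by (simp add: epow_def)
qed (use assms in \<open>simp_all add: epow_def\<close>)

lemma level_set_in_sets:
  fixes u :: "'a::euclidean_space \<Rightarrow> ereal"
  assumes "\<Omega> \<in> sets lebesgue" and "u \<in> borel_measurable (restrict_space lebesgue \<Omega>)"
  shows "{x\<in>\<Omega>. ereal c < \<bar>u x\<bar>} \<in> sets lebesgue"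
proof -
  have "{x \<in> space (restrict_space lebesgue \<Omega>). ereal c < \<bar>u x\<bar>} \<in> sets (restrict_space lebesgue \<Omega>)"
    using assms(2) by measurable
  then show ?thesis
    using assms(1) by (simp add: space_restrict_space sets_restrict_space_iff)
qed

lemma rearrangement_nonneg: "0 \<le> rearrangement \<Omega> u t"
  unfolding rearrangement_def by (rule Inf_greatest) auto

lemma ereal_le_rearrangement:
  fixes u :: "'a::euclidean_space \<Rightarrow> ereal"
  assumes "\<Omega> \<in> sets lebesgue" and "u \<in> borel_measurable (restrict_space lebesgue \<Omega>)"
    and "0 \<le> t" and "ennreal t < emeasure lebesgue {x\<in>\<Omega>. ereal c < \<bar>u x\<bar>}"
  shows "ereal c \<le> rearrangement \<Omega> u t"
  unfolding rearrangement_def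
proof (rule Inf_greatest)
  fix y assume "y \<in> ereal ` {l. 0 < l \<and> emeasure lebesgue {x\<in>\<Omega>. ereal l < \<bar>u x\<bar>} \<le> ennreal t}"
  then obtain l where y: "y = ereal l" and l: "emeasure lebesgue {x\<in>\<Omega>. ereal l < \<bar>u x\<bar>} \<le> ennreal t"
    by auto
  show "ereal c \<le> y"
  proof (rule ccontr)
    assume "\<not> ereal c \<le> y"
    then have "{x\<in>\<Omega>. ereal c < \<bar>u x\<bar>} \<subseteq> {x\<in>\<Omega>. ereal l < \<bar>u x\<bar>}"
      using y by (auto elim: order.strict_trans[rotated])
    then have "emeasure lebesgue {x\<in>\<Omega>. ereal c < \<bar>u x\<bar>} \<le> ennreal t"
      using l level_set_in_sets[OF assms(1,2)] by (meson emeasure_mono order_trans)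
    then show False using assms(4) by simp
  qed
qed

lemma suminf_power_step_emeasure_le_rearrangement:
  fixes u :: "'a::euclidean_space \<Rightarrow> ereal"
  assumes \<Omega>: "\<Omega> \<in> fmeasurable lebesgue" and u: "u \<in> borel_measurable (restrict_space lebesgue \<Omega>)"
    and "1 < a"
  shows "(\<Sum>k. ennreal (power_step a k) * emeasure lebesgue {x\<in>\<Omega>. ereal (real k) < \<bar>u x\<bar>})
    \<le> (\<integral>\<^sup>+ t \<in> {0..measure lebesgue \<Omega>}. epow a (rearrangement \<Omega> u t) \<partial>lborel)"
proof -
  (* The k-th layer, of measure \<mu> k, is traded for the interval [0, \<mu> k), on which k \<le> u*(t). *)
  define \<mu> where "\<mu> k = measure lebesgue {x\<in>\<Omega>. ereal (real k) < \<bar>u x\<bar>}" for k :: nat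
  have level: "{x\<in>\<Omega>. ereal c < \<bar>u x\<bar>} \<in> sets lebesgue" for c
    using level_set_in_sets \<Omega> u by blast
  have emeasure_level: "emeasure lebesgue {x\<in>\<Omega>. ereal (real k) < \<bar>u x\<bar>} = ennreal (\<mu> k)" for k
    unfolding \<mu>_def using fmeasurableI2[OF \<Omega> _ level]
    by (intro emeasure_eq_ennreal_measure fmeasurableD2) blast
  have \<mu>_le: "\<mu> k \<le> measure lebesgue \<Omega>" for k
    unfolding \<mu>_def using \<Omega> level by (intro measure_mono_fmeasurable) auto
  have "(\<Sum>k. ennreal (power_step a k) * emeasure lebesgue {x\<in>\<Omega>. ereal (real k) < \<bar>u x\<bar>})
      = (\<Sum>k. \<integral>\<^sup>+ t. ennreal (power_step a k) * indicator {0..<\<mu> k} t \<partial>lborel)"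
    using measure_nonneg by (simp add: emeasure_level nn_integral_cmult_indicator \<mu>_def)
  also have "\<dots> = (\<integral>\<^sup>+ t. (\<Sum>k. ennreal (power_step a k) * indicator {0..<\<mu> k} t) \<partial>lborel)"
    by (rule nn_integral_suminf[symmetric]) auto
  also have "\<dots> \<le> (\<integral>\<^sup>+ t \<in> {0..measure lebesgue \<Omega>}. epow a (rearrangement \<Omega> u t) \<partial>lborel)"
  proof (intro nn_integral_mono)
    fix t :: real
    show "(\<Sum>k. ennreal (power_step a k) * indicator {0..<\<mu> k} t)
        \<le> epow a (rearrangement \<Omega> u t) * indicator {0..measure lebesgue \<Omega>} t"
    proof (cases "t \<in> {0..measure lebesgue \<Omega>}")
      case True
      have "ereal (real k) \<le> rearrangement \<Omega> u t" if "t < \<mu> k" for k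
        using True that by (intro ereal_le_rearrangement[OF fmeasurableD[OF \<Omega>] u])
          (auto simp: emeasure_level intro: ennreal_lessI)
      then have "(\<Sum>k. ennreal (power_step a k) * of_bool (t < \<mu> k)) \<le> epow a (rearrangement \<Omega> u t)"
        by (intro suminf_power_step_le_epow[OF \<open>1 < a\<close> rearrangement_nonneg])
      then show ?thesis using True by (simp add: indicator_def)
    next
      case False
      then have "indicator {0..<\<mu> k} t = (0::ennreal)" for k
        using \<mu>_le[of k] by (auto simp: indicator_def)
      then show ?thesis by simp
    qed
  qed
  finally show ?thesis .
qed

lemma nn_integral_epow_le_suminf_power_step:
  fixes S :: "'a::euclidean_space \<Rightarrow> ereal"
  assumes \<Omega>: "\<Omega> \<in> sets lebesgue" and S[measurable]: "S \<in> borel_measurable (restrict_space lebesgue \<Omega>)"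
    and S_pos: "\<And>x. x \<in> \<Omega> \<Longrightarrow> 0 < S x" and "1 < a"
  shows "(\<integral>\<^sup>+ x. epow a (S x) \<partial>restrict_space lebesgue \<Omega>)
    \<le> ennreal a * (\<Sum>k. ennreal (power_step a k) * emeasure lebesgue {x\<in>\<Omega>. ereal (real k) < \<bar>S x\<bar>})"
proof -
  let ?R = "restrict_space lebesgue \<Omega>"
  let ?L = "\<lambda>k. {x\<in>\<Omega>. ereal (real k) < \<bar>S x\<bar>}"
  have L_sets: "?L k \<in> sets ?R" for k
    using level_set_in_sets[OF \<Omega> S] \<Omega> by (simp add: sets_restrict_space_iff)
  have "(\<integral>\<^sup>+ x. epow a (S x) \<partial>?R)
      \<le> (\<integral>\<^sup>+ x. ennreal a * (\<Sum>k. ennreal (power_step a k) * indicator (?L k) x) \<partial>?R)"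
  proof (intro nn_integral_mono)
    fix x assume "x \<in> space ?R"
    then have "x \<in> \<Omega>" by (simp add: space_restrict_space)
    then show "epow a (S x) \<le> ennreal a * (\<Sum>k. ennreal (power_step a k) * indicator (?L k) x)"
      using epow_le_suminf_power_step[OF \<open>1 < a\<close> S_pos] S_pos[of x]
      by (simp add: indicator_def abs_ereal_pos less_imp_le)
  qed
  also have "\<dots> = ennreal a * (\<Sum>k. \<integral>\<^sup>+ x. ennreal (power_step a k) * indicator (?L k) x \<partial>?R)"
    using L_sets by (simp add: nn_integral_cmult nn_integral_suminf)
  also have "\<dots> = ennreal a * (\<Sum>k. ennreal (power_step a k) * emeasure lebesgue (?L k))"
    using L_sets \<Omega> by (simp add: nn_integral_cmult_indicator emeasure_restrict_space)
  finally show ?thesis .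
qed

lemma nn_integral_epow_le_rearrangement:
  fixes S :: "'a::euclidean_space \<Rightarrow> ereal"
  assumes "\<Omega> \<in> fmeasurable lebesgue" and "S \<in> borel_measurable (restrict_space lebesgue \<Omega>)"
    and "\<And>x. x \<in> \<Omega> \<Longrightarrow> 0 < S x" and "1 < a"
  shows "(\<integral>\<^sup>+ x. epow a (S x) \<partial>restrict_space lebesgue \<Omega>)
    \<le> ennreal a * (\<integral>\<^sup>+ t \<in> {0..measure lebesgue \<Omega>}. epow a (rearrangement \<Omega> S t) \<partial>lborel)"
  using nn_integral_epow_le_suminf_power_step[OF fmeasurableD[OF assms(1)] assms(2-4)]
    suminf_power_step_emeasure_le_rearrangement[OF assms(1,2,4)]
  by (meson order_trans mult_left_mono zero_le)

definition gap_exponent :: "('a \<Rightarrow> real) \<Rightarrow> ('a \<Rightarrow> real) \<Rightarrow> 'a \<Rightarrow> ereal" where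
  "gap_exponent p q x = (if p x = q x then \<infinity> else ereal (1 / (p x - q x)))"

lemma borel_measurable_gap_exponent [measurable]:
  assumes [measurable]: "p \<in> borel_measurable M" "q \<in> borel_measurable M"
  shows "gap_exponent p q \<in> borel_measurable M"
  unfolding gap_exponent_def by measurable

lemma gap_exponent_pos: "q x \<le> p x \<Longrightarrow> 0 < gap_exponent p q x"
  by (auto simp: gap_exponent_def)

lemma borel_measurable_epow [measurable]:
  assumes [measurable]: "f \<in> borel_measurable M"
  shows "(\<lambda>x. epow a (f x)) \<in> borel_measurable M"
  unfolding epow_def by measurable

(* A strict bound is needed: only then does the infimum defining var_norm yield an admissible l. *)
lemma nn_integral_powr_le_of_var_norm_less:
  assumes \<Omega>: "\<Omega> \<in> sets lebesgue"
    and [measurable]: "u \<in> borel_measurable (restrict_space lebesgue \<Omega>)"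
      "p \<in> borel_measurable (restrict_space lebesgue \<Omega>)"
    and p: "\<And>x. x \<in> \<Omega> \<Longrightarrow> 0 \<le> p x \<and> p x \<le> P" and "1 \<le> c" and "var_norm \<Omega> p u < ennreal c"
  shows "(\<integral>\<^sup>+ x. ennreal (\<bar>u x\<bar> powr p x) \<partial>restrict_space lebesgue \<Omega>) \<le> ennreal (c powr P)"
proof -
  let ?R = "restrict_space lebesgue \<Omega>"
  obtain l where "0 < l" "ennreal l < ennreal c"
    and modular: "(\<integral>\<^sup>+ x. ennreal (\<bar>u x / l\<bar> powr p x) * indicator \<Omega> x \<partial>lebesgue) \<le> 1"
    using assms(6) unfolding var_norm_def Inf_less_iff by auto
  then have "l < c" by (simp add: ennreal_less_iff)
  have "(\<integral>\<^sup>+ x. ennreal (\<bar>u x\<bar> powr p x) \<partial>?R)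
      \<le> (\<integral>\<^sup>+ x. ennreal (c powr P) * ennreal (\<bar>u x / l\<bar> powr p x) \<partial>?R)"
  proof (intro nn_integral_mono)
    fix x assume "x \<in> space ?R"
    then have p_x: "0 \<le> p x" "p x \<le> P" using p by (auto simp: space_restrict_space)
    have "\<bar>u x\<bar> powr p x = l powr p x * \<bar>u x / l\<bar> powr p x"
      using \<open>0 < l\<close> by (simp add: abs_divide powr_divide)
    also have "\<dots> \<le> c powr P * \<bar>u x / l\<bar> powr p x"
    proof (rule mult_right_mono)
      have "l powr p x \<le> c powr p x" using \<open>0 < l\<close> \<open>l < c\<close> p_x by (intro powr_mono2) auto
      also have "\<dots> \<le> c powr P" using \<open>1 \<le> c\<close> p_x by (intro powr_mono) auto
      finally show "l powr p x \<le> c powr P" .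
    qed simp
    finally show "ennreal (\<bar>u x\<bar> powr p x) \<le> ennreal (c powr P) * ennreal (\<bar>u x / l\<bar> powr p x)"
      by (simp add: ennreal_mult[symmetric] ennreal_leI)
  qed
  also have "\<dots> = ennreal (c powr P) * (\<integral>\<^sup>+ x. ennreal (\<bar>u x / l\<bar> powr p x) * indicator \<Omega> x \<partial>lebesgue)"
    using \<Omega> by (simp add: nn_integral_cmult nn_integral_restrict_space)
  also have "\<dots> \<le> ennreal (c powr P)"
    using mult_left_mono[OF modular] by simp
  finally show ?thesis .
qed

lemma var_norm_leI:
  assumes "0 < l" and "(\<integral>\<^sup>+ x. ennreal (\<bar>u x / l\<bar> powr e x) * indicator \<Omega> x \<partial>lebesgue) \<le> 1"
  shows "var_norm \<Omega> e u \<le> ennreal l"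
  unfolding var_norm_def by (rule Inf_lower) (use assms in auto)

lemma var_norm_mult_indicator_le:
  fixes \<Omega> :: "'a::euclidean_space set"
  assumes \<Omega>: "\<Omega> \<in> sets lebesgue" and E: "E \<in> sets lebesgue"
    and [measurable]: "p \<in> borel_measurable (restrict_space lebesgue \<Omega>)"
      "q \<in> borel_measurable (restrict_space lebesgue \<Omega>)"
      "u \<in> borel_measurable (restrict_space lebesgue \<Omega>)"
    and pq: "\<And>x. x \<in> \<Omega> \<Longrightarrow> 1 \<le> q x \<and> q x \<le> p x \<and> p x \<le> P"
    and l: "0 < l" "l \<le> 1" and u: "var_norm \<Omega> p u \<le> 1"
    and small: "(\<integral>\<^sup>+ x. epow (2 powr ((P+1)*P) * l powr (-(P*P))) (gap_exponent p q x) * indicator E x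
      \<partial>restrict_space lebesgue \<Omega>) \<le> ennreal (1/2)"
  shows "var_norm \<Omega> q (\<lambda>x. u x * indicator E x) \<le> ennreal l"
proof -
  let ?R = "restrict_space lebesgue \<Omega>"
  define A where "A = 2 powr ((P+1)*P) * l powr (-(P*P))"
  define \<delta> where "\<delta> = (2::real) powr (-(P+1))"
  have [measurable]: "indicator E \<in> borel_measurable ?R"
    using E by (intro measurable_restrict_space1) simp
  have modular_p: "(\<integral>\<^sup>+ x. ennreal (\<bar>u x\<bar> powr p x) \<partial>?R) \<le> ennreal (2 powr P)"
  proof (rule nn_integral_powr_le_of_var_norm_less[OF \<Omega>])
    show "0 \<le> p x \<and> p x \<le> P" if "x \<in> \<Omega>" for x
      using pq[OF that] by linarith
    show "var_norm \<Omega> p u < ennreal 2"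
      using u by (rule le_less_trans) simp
  qed auto
  have pointwise: "ennreal (\<bar>u x * indicator E x / l\<bar> powr q x)
      \<le> ennreal \<delta> * ennreal (\<bar>u x\<bar> powr p x) + epow A (gap_exponent p q x) * indicator E x"
    if "x \<in> \<Omega>" for x
  proof (cases "x \<in> E \<and> p x \<noteq> q x")
    case True
    then have "(\<bar>u x\<bar> / l) powr q x \<le> \<delta> * \<bar>u x\<bar> powr p x + A powr (1 / (p x - q x))"
      unfolding \<delta>_def A_def using pq[OF that] l by (intro powr_div_le_young_uniform) auto
    then have "ennreal ((\<bar>u x\<bar> / l) powr q x)
        \<le> ennreal (\<delta> * \<bar>u x\<bar> powr p x + A powr (1 / (p x - q x)))"
      by (rule ennreal_leI)
    then show ?thesis
      using True l by (simp add: abs_divide gap_exponent_def epow_def ennreal_plus ennreal_mult \<delta>_def)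
  next
    case False
    then show ?thesis by (cases "x \<in> E") (auto simp: gap_exponent_def epow_def)
  qed
  have "(\<integral>\<^sup>+ x. ennreal (\<bar>u x * indicator E x / l\<bar> powr q x) * indicator \<Omega> x \<partial>lebesgue)
      = (\<integral>\<^sup>+ x. ennreal (\<bar>u x * indicator E x / l\<bar> powr q x) \<partial>?R)"
    using \<Omega> by (simp add: nn_integral_restrict_space)
  also have "\<dots> \<le> (\<integral>\<^sup>+ x. ennreal \<delta> * ennreal (\<bar>u x\<bar> powr p x)
      + epow A (gap_exponent p q x) * indicator E x \<partial>?R)"
    using pointwise by (intro nn_integral_mono) (simp add: space_restrict_space)
  also have "\<dots> = ennreal \<delta> * (\<integral>\<^sup>+ x. ennreal (\<bar>u x\<bar> powr p x) \<partial>?R)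
      + (\<integral>\<^sup>+ x. epow A (gap_exponent p q x) * indicator E x \<partial>?R)"
    by (simp add: nn_integral_add nn_integral_cmult)
  also have "\<dots> \<le> ennreal \<delta> * ennreal (2 powr P) + ennreal (1/2)"
    using small modular_p unfolding A_def by (intro add_mono mult_left_mono) auto
  also have "ennreal \<delta> * ennreal (2 powr P) = ennreal (1/2)"
    unfolding \<delta>_def by (simp only: ennreal_mult'[symmetric] powr_ge_zero powr_add[symmetric]) simp
  also have "ennreal (1/2) + ennreal (1/2) = 1"
    by (subst ennreal_plus[symmetric]) auto
  finally show ?thesis using l(1) by (rule var_norm_leI[rotated])
qed

lemma nn_integral_mult_indicator_tendsto_zero:
  fixes f :: "'a \<Rightarrow> ennreal"
  assumes [measurable]: "f \<in> borel_measurable M" "\<And>n. E n \<in> sets M"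
    and "(\<integral>\<^sup>+ x. f x \<partial>M) < \<infinity>" and "AE x in M. (\<lambda>n. indicator (E n) x :: real) \<longlonglongrightarrow> 0"
  shows "(\<lambda>n. \<integral>\<^sup>+ x. f x * indicator (E n) x \<partial>M) \<longlonglongrightarrow> 0"
proof -
  have "AE x in M. (\<lambda>n. f x * indicator (E n) x) \<longlonglongrightarrow> 0"
    using assms(4)
  proof eventually_elim
    fix x assume "(\<lambda>n. indicator (E n) x :: real) \<longlonglongrightarrow> 0"
    then have "eventually (\<lambda>n. indicator (E n) x < (1::real)) sequentially"
      by (rule order_tendstoD) simp
    then have "eventually (\<lambda>n. f x * indicator (E n) x = 0) sequentially"
      by eventually_elim (simp add: indicator_def split: if_splits)
    then show "(\<lambda>n. f x * indicator (E n) x) \<longlonglongrightarrow> 0"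
      by (rule tendsto_eventually)
  qed
  then have "(\<lambda>n. \<integral>\<^sup>+ x. f x * indicator (E n) x \<partial>M) \<longlonglongrightarrow> (\<integral>\<^sup>+ x. 0 \<partial>M)"
    using assms(3) by (intro nn_integral_dominated_convergence[where w=f]) (auto simp: indicator_def)
  then show ?thesis by simp
qed

lemma tendsto_zero_ennrealI:
  fixes f :: "'b \<Rightarrow> ennreal"
  assumes "\<And>l. 0 < l \<Longrightarrow> l \<le> 1 \<Longrightarrow> eventually (\<lambda>n. f n \<le> ennreal l) F"
  shows "(f \<longlongrightarrow> 0) F"
proof (rule order_tendstoI)
  fix y :: ennreal assume "0 < y"
  obtain l where "0 < l" "l \<le> 1" "ennreal l < y"
  proof (cases y rule: ennreal_cases)
    case (real r)
    then show ?thesis using \<open>0 < y\<close> by (intro that[of "min 1 (r/2)"]) (auto simp: ennreal_lessI)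
  qed (auto intro: that[of 1])
  with assms[of l] show "eventually (\<lambda>n. f n < y) F"
    by (auto elim: eventually_mono)
qed simp

lemma almost_compact_embeddingI:
  fixes \<Omega> :: "'a::euclidean_space set"
  assumes \<Omega>: "\<Omega> \<in> sets lebesgue"
    and [measurable]: "p \<in> borel_measurable (restrict_space lebesgue \<Omega>)"
      "q \<in> borel_measurable (restrict_space lebesgue \<Omega>)"
    and pq: "\<And>x. x \<in> \<Omega> \<Longrightarrow> 1 \<le> q x \<and> q x \<le> p x \<and> p x \<le> P" and "1 \<le> P"
    and integrable: "\<And>a. 1 < a \<Longrightarrow> (\<integral>\<^sup>+ x. epow a (gap_exponent p q x) \<partial>restrict_space lebesgue \<Omega>) < \<infinity>"
  shows "almost_compact_embedding \<Omega> p q"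
  unfolding almost_compact_embedding_def
proof (intro allI impI tendsto_zero_ennrealI)
  let ?R = "restrict_space lebesgue \<Omega>"
  fix E :: "nat \<Rightarrow> 'a set" and l :: real
  assume E: "\<forall>n. E n \<in> sets lebesgue \<and> E n \<subseteq> \<Omega>"
    and E_AE: "AE x in lebesgue. (\<lambda>n. indicator (E n) x :: real) \<longlonglongrightarrow> 0"
    and l: "0 < l" "l \<le> 1"
  define A where "A = 2 powr ((P+1)*P) * l powr (-(P*P))"
  have "l powr 0 \<le> l powr (-(P*P))" using l by (intro powr_mono') auto
  then have "1 \<le> l powr (-(P*P))" using l by simp
  moreover have "1 < (2::real) powr ((P+1)*P)" using \<open>1 \<le> P\<close> by (intro gr_one_powr) auto
  ultimately have "1 < A" unfolding A_def by (smt (verit) mult_le_cancel_left1)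
  have "(\<lambda>n. \<integral>\<^sup>+ x. epow A (gap_exponent p q x) * indicator (E n) x \<partial>?R) \<longlonglongrightarrow> 0"
  proof (rule nn_integral_mult_indicator_tendsto_zero)
    show "E n \<in> sets ?R" for n
      using E \<Omega> by (simp add: sets_restrict_space_iff Int_absorb1)
    show "AE x in ?R. (\<lambda>n. indicator (E n) x :: real) \<longlonglongrightarrow> 0"
      using E_AE \<Omega> by (subst AE_restrict_space_iff) (auto elim: eventually_mono)
  qed (use integrable[OF \<open>1 < A\<close>] in auto)
  then have "eventually (\<lambda>n.
      (\<integral>\<^sup>+ x. epow A (gap_exponent p q x) * indicator (E n) x \<partial>?R) < ennreal (1/2)) sequentially"
    by (rule order_tendstoD) (use ennreal_less_zero_iff[of "1/2"] in simp)
  then show "eventually (\<lambda>n. (SUP u\<in>{u \<in> var_Lebesgue \<Omega> p. var_norm \<Omega> p u \<le> 1}.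
      var_norm \<Omega> q (\<lambda>x. u x * indicator (E n) x)) \<le> ennreal l) sequentially"
  proof eventually_elim
    case (elim n)
    show ?case
    proof (rule SUP_least)
      fix u assume "u \<in> {u \<in> var_Lebesgue \<Omega> p. var_norm \<Omega> p u \<le> 1}"
      then show "var_norm \<Omega> q (\<lambda>x. u x * indicator (E n) x) \<le> ennreal l"
        using E less_imp_le[OF elim[unfolded A_def]]
        by (intro var_norm_mult_indicator_le[OF \<Omega> _ _ _ _ pq l]) (auto simp: var_Lebesgue_def meas_on_def)
    qed
  qed
qed

theorem theorem3p4:
  fixes \<Omega> :: "'a::euclidean_space set"
    and p q :: "'a \<Rightarrow> real" and p_plus :: real
  assumes "bounded \<Omega>" and "open \<Omega>"
    and "meas_on \<Omega> p" and "meas_on \<Omega> q"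
    and "\<And>x. x \<in> \<Omega> \<Longrightarrow> 1 \<le> q x \<and> q x \<le> p x \<and> p x \<le> p_plus"
    and "\<And>a. a > 1 \<Longrightarrow>
      (\<integral>\<^sup>+ t \<in> {0..measure lebesgue \<Omega>}.
          epow a (rearrangement \<Omega>
             (\<lambda>x. if p x = q x then \<infinity> else ereal (1 / (p x - q x))) t) \<partial>lborel) < \<infinity>"
  shows "almost_compact_embedding \<Omega> p q"
proof -
  have \<Omega>: "\<Omega> \<in> fmeasurable lebesgue" using lmeasurable_open[OF assms(1,2)] .
  have [measurable]: "p \<in> borel_measurable (restrict_space lebesgue \<Omega>)"
      "q \<in> borel_measurable (restrict_space lebesgue \<Omega>)"
    using assms(3,4) by (simp_all add: meas_on_def)
  (* p_plus may lie below 1 when \<Omega> is empty. *)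
  show ?thesis
  proof (rule almost_compact_embeddingI[where P = "max 1 p_plus"])
    fix a :: real assume "1 < a"
    have "(\<integral>\<^sup>+ x. epow a (gap_exponent p q x) \<partial>restrict_space lebesgue \<Omega>)
      \<le> ennreal a * (\<integral>\<^sup>+ t \<in> {0..measure lebesgue \<Omega>}.
            epow a (rearrangement \<Omega> (gap_exponent p q) t) \<partial>lborel)"
      using assms(5) \<open>1 < a\<close> by (intro nn_integral_epow_le_rearrangement[OF \<Omega>] gap_exponent_pos) auto
    also have "\<dots> < \<infinity>"
      using assms(6)[OF \<open>1 < a\<close>] by (simp add: gap_exponent_def[abs_def] ennreal_mult_less_top)
    finally show "(\<integral>\<^sup>+ x. epow a (gap_exponent p q x) \<partial>restrict_space lebesgue \<Omega>) < \<infinity>" .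
  qed (use \<Omega> assms(5) in \<open>auto simp: max.coboundedI2\<close>)
qed

end
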